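(* Let $t>0$, $x\in\mathbb{R}$, let $v_0$ be continuous and bounded on $\mathbb{R}$, and let $c$ be continuous on $[0,\infty)\times\mathbb{R}$ with lower bound $m$, having an $x$-derivative $c_x$ on $]0,\infty)\times\mathbb{R}$ that extends continuously and boundedly to $[0,\infty)\times\mathbb{R}$. For integers $n\ge1$, $t_i=i/n$ and $w\in C_W$ define $$F_n(w)=\exp\Big(\frac n2\sum_{i=1}^n\big[(1-\mathrm{ch}(2t/n))w(t_i)^2+(1-\mathrm{ch}(2t/n)^{-1})w(t_{i-1})^2\big]\Big),$$ $$G_n(w)=\exp\Big(-\frac12\frac{\mathrm{sh}(2t/n)}{\mathrm{ch}(2t/n)}\sum_{j=0}^{n-1}\Big((n\,\mathrm{sh}(2t/n))^{1/2}w(t_j)+\frac{x}{\mathrm{ch}(2t/n)^j}\Big)^2\Big),$$ $$H_n(w)=\exp\Big(-\frac tn\sum_{j=0}^{n-1}c\Big(\frac{(n-j)t}{n},(n\,\mathrm{sh}(2t/n))^{1/2}w(j/n)+\frac{x}{\mathrm{ch}(2t/n)^j}\Big)\Big).$$ Then for all $w\in C_W$: (i) $0\le F_n(w)\le1$ and $\lim_{n\to\infty}F_n(w)=1$; (ii) $0\le G_n(w)\le1$ and $\lim_{n\to\infty}G_n(w)=\exp\big(-t\int_0^1(x+\sqrt{2t}\,w(s))^2ds\big)$; (iii) $0\le H_n(w)\le e^{-mt}$ and $\lim_{n\to\infty}H_n(w)=\exp\big(-t\int_0^1c(t(1-s),\sqrt{2t}\,w(s)+x)\,ds\big)$; (iv)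 $\big|v_0\big((n\,\mathrm{sh}(2t/n))^{1/2}w(1)+\frac{x}{\mathrm{ch}(2t/n)^n}\big)\big|\le\|v_0\|_\infty$ and $\lim_{n\to\infty}v_0\big((n\,\mathrm{sh}(2t/n))^{1/2}w(1)+\frac{x}{\mathrm{ch}(2t/n)^n}\big)=v_0(\sqrt{2t}\,w(1)+x)$.
   Context: $C_W$ is the set of real continuous functions $w$ on $[0,1]$ with $w(0)=0$. $\mathrm{ch},\mathrm{sh}$ are hyperbolic cosine and sine. *)

theory Defs
  imports "HOL-Analysis.Analysis"
begin

definition CW :: "(real \<Rightarrow> real) set" where
  "CW = {w. continuous_on {0..1} w \<and> w 0 = 0}"

definition Fn :: "real \<Rightarrow> (real \<Rightarrow> real) \<Rightarrow> nat \<Rightarrow> real" where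
  "Fn t w n = exp (real n / 2 * (\<Sum>i=1..n.
      (1 - cosh (2*t / real n)) * (w (real i / real n))^2
    + (1 - inverse (cosh (2*t / real n))) * (w (real (i - 1) / real n))^2))"

definition Gn :: "real \<Rightarrow> real \<Rightarrow> (real \<Rightarrow> real) \<Rightarrow> nat \<Rightarrow> real" where
  "Gn t x w n = exp (- (1/2) * (sinh (2*t / real n) / cosh (2*t / real n)) *
     (\<Sum>j=0..n-1. (sqrt (real n * sinh (2*t / real n)) * w (real j / real n)
        + x / cosh (2*t / real n) ^ j)^2))"

definition Hn :: "real \<Rightarrow> real \<Rightarrow> (real \<Rightarrow> real \<Rightarrow> real) \<Rightarrow> (real \<Rightarrow> real) \<Rightarrow> nat \<Rightarrow> real" where
  "Hn t x c w n = exp (- (t / real n) * (\<Sum>j=0..n-1.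
      c (real (n - j) * t / real n)
        (sqrt (real n * sinh (2*t / real n)) * w (real j / real n)
          + x / cosh (2*t / real n) ^ j)))"

definition supnorm :: "(real \<Rightarrow> real) \<Rightarrow> real" where
  "supnorm f = (SUP y. \<bar>f y\<bar>)"

end

(*
  All four quantities are evaluated along the discretised path
  y_j = sqrt (n sh(2t/n)) w(j/n) + x / ch(2t/n)^j.  Since n sh(2t/n) -> 2t and
  ch(2t/n)^j -> 1 uniformly in j <= n, this path is uniformly close to sqrt(2t) w(j/n) + x,
  so by uniform continuity of the integrands on compact sets the sums in G_n and H_n are
  perturbed Riemann sums and converge to the stated integrals.  For F_n, shifting the index
  in the second sum (w(0) = 0) leaves the nonnegative coefficients ch + 1/ch - 2 = O(n^-4)
  and ch - 1 = O(n^-2), multiplying a sum of n bounded squares and w(1)^2 respectively,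
  so the exponent is nonpositive and tends to 0.
*)
theory Submission
  imports Defs "HOL-Real_Asymp.Real_Asymp"
begin

lemma abs_average_diff_le:
  fixes a b :: "nat \<Rightarrow> real"
  assumes "e \<ge> 0" and "\<And>j. j < n \<Longrightarrow> \<bar>a j - b j\<bar> \<le> e"
  shows "\<bar>(\<Sum>j<n. a j) / real n - (\<Sum>j<n. b j) / real n\<bar> \<le> e"
proof (cases "n = 0")
  case False
  have "\<bar>(\<Sum>j<n. a j) - (\<Sum>j<n. b j)\<bar> \<le> (\<Sum>j<n. \<bar>a j - b j\<bar>)"
    by (metis sum_abs sum_subtractf)
  also have "\<dots> \<le> real n * e"
    using sum_mono[of "{..<n}" "\<lambda>j. \<bar>a j - b j\<bar>" "\<lambda>_. e"] assms(2) by simp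
  finally show ?thesis
    using False by (simp add: diff_divide_distrib [symmetric] divide_le_eq mult.commute)
qed (use assms in simp)

lemma integral_approx_left_endpoint:
  fixes f :: "real \<Rightarrow> real"
  assumes f: "f integrable_on {a..b}" and "a \<le> b"
    and close: "\<And>s. s \<in> {a..b} \<Longrightarrow> \<bar>f s - f a\<bar> \<le> e"
  shows "\<bar>integral {a..b} f - (b - a) * f a\<bar> \<le> e * (b - a)"
proof -
  have "integral {a..b} (\<lambda>s. f s - f a) = integral {a..b} f - (b - a) * f a"
    using integral_diff[OF f integrable_const_ivl] \<open>a \<le> b\<close> by simp
  moreover have "norm (integral (cbox a b) (\<lambda>s. f s - f a)) \<le> e * measure lborel (cbox a b)"
    using close f \<open>a \<le> b\<close>
    by (intro has_integral_bound[OF _ integrable_integral] integrable_diff f integrable_const_ivl)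
       (auto intro: order_trans[OF abs_ge_zero close[of a]])
  ultimately show ?thesis
    using \<open>a \<le> b\<close> by simp
qed

lemma integral_split_uniform:
  fixes f :: "real \<Rightarrow> real"
  assumes f: "continuous_on {0..1} f" and "k \<le> n"
  shows "integral {0..real k / real n} f
           = (\<Sum>j<k. integral {real j / real n..real (Suc j) / real n} f)"
  using \<open>k \<le> n\<close>
proof (induction k)
  case (Suc k)
  have "integral {0..real k / real n} f + integral {real k / real n..real (Suc k) / real n} f
          = integral {0..real (Suc k) / real n} f"
    using Suc.prems
    by (intro Henstock_Kurzweil_Integration.integral_combine integrable_continuous_interval continuous_on_subset[OF f])
       (auto simp: divide_right_mono field_simps)
  with Suc show ?case by simp
qed simp

lemma riemann_sum_error_le:
  fixes f :: "real \<Rightarrow> real"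
  assumes f: "continuous_on {0..1} f" and "n > 0"
    and modulus: "\<And>s s'. s \<in> {0..1} \<Longrightarrow> s' \<in> {0..1} \<Longrightarrow> \<bar>s' - s\<bar> \<le> 1 / real n
      \<Longrightarrow> \<bar>f s' - f s\<bar> \<le> e"
  shows "\<bar>(\<Sum>j<n. f (real j / real n)) / real n - integral {0..1} f\<bar> \<le> e"
proof -
  define I where "I j = integral {real j / real n..real (Suc j) / real n} f" for j
  have "integral {0..1} f = (\<Sum>j<n. real n * I j) / real n"
    using integral_split_uniform[OF f order_refl, of n] \<open>n > 0\<close>
    by (simp add: I_def sum_distrib_left [symmetric])
  moreover have "\<bar>f (real j / real n) - real n * I j\<bar> \<le> e" if "j < n" for j
  proof -
    define a b where "a = real j / real n" and "b = real (Suc j) / real n"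
    have ab: "0 \<le> a" "a \<le> b" "b \<le> 1" "b - a = 1 / real n"
      using that \<open>n > 0\<close> by (auto simp: a_def b_def divide_right_mono field_simps)
    have "\<bar>I j - (b - a) * f a\<bar> \<le> e * (b - a)"
      unfolding I_def a_def [symmetric] b_def [symmetric]
    proof (rule integral_approx_left_endpoint)
      show "f integrable_on {a..b}"
        using ab by (intro integrable_continuous_interval continuous_on_subset[OF f]) auto
      show "\<bar>f s - f a\<bar> \<le> e" if "s \<in> {a..b}" for s
        using modulus[of a s] that ab by auto
    qed (use ab in simp)
    then have "real n * \<bar>I j - f a / real n\<bar> \<le> e"
      using \<open>n > 0\<close> ab(4) by (simp add: field_simps)
    moreover have "real n * \<bar>I j - f a / real n\<bar> = \<bar>real n * (I j - f a / real n)\<bar>"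
      by (simp add: abs_mult)
    moreover have "real n * (I j - f a / real n) = real n * I j - f a"
      using \<open>n > 0\<close> by (simp add: field_simps)
    ultimately show ?thesis
      by (simp add: a_def abs_minus_commute)
  qed
  moreover have "e \<ge> 0"
    using modulus[of 0 0] by simp
  ultimately show ?thesis
    using abs_average_diff_le[of e n "\<lambda>j. f (real j / real n)" "\<lambda>j. real n * I j"] by simp
qed

theorem riemann_sum_tendsto_integral:
  fixes f :: "real \<Rightarrow> real"
  assumes f: "continuous_on {0..1} f"
  shows "(\<lambda>n. (\<Sum>j<n. f (real j / real n)) / real n) \<longlonglongrightarrow> integral {0..1} f"
proof (rule tendstoI)
  fix r :: real assume "r > 0"
  then obtain d where "d > 0" and d: "\<And>s s'. s \<in> {0..1} \<Longrightarrow> s' \<in> {0..1} \<Longrightarrow> dist s' s < d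
      \<Longrightarrow> dist (f s') (f s) < r/2"
    using compact_uniformly_continuous[OF f compact_Icc]
    unfolding uniformly_continuous_on_def by (metis half_gt_zero)
  have "eventually (\<lambda>n. 1 / real n < d) sequentially"
    using \<open>d > 0\<close> by real_asymp
  with eventually_gt_at_top[of 0]
  show "eventually (\<lambda>n. dist ((\<Sum>j<n. f (real j / real n)) / real n) (integral {0..1} f) < r) sequentially"
  proof eventually_elim
    case (elim n)
    have "\<bar>(\<Sum>j<n. f (real j / real n)) / real n - integral {0..1} f\<bar> \<le> r/2"
      using elim d by (intro riemann_sum_error_le[OF f]) (auto simp: dist_real_def less_imp_le)
    then show ?case
      using \<open>r > 0\<close> by (simp add: dist_real_def)
  qed
qed

lemma riemann_sum_perturbed_tendsto_integral:
  fixes g :: "nat \<Rightarrow> nat \<Rightarrow> real" and f :: "real \<Rightarrow> real"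
  assumes f: "continuous_on {0..1} f"
    and close: "\<And>e. e > 0 \<Longrightarrow> eventually (\<lambda>n. \<forall>j<n. \<bar>g n j - f (real j / real n)\<bar> \<le> e) sequentially"
  shows "(\<lambda>n. (\<Sum>j<n. g n j) / real n) \<longlonglongrightarrow> integral {0..1} f"
proof -
  have "(\<lambda>n. (\<Sum>j<n. g n j) / real n - (\<Sum>j<n. f (real j / real n)) / real n) \<longlonglongrightarrow> 0"
  proof (rule tendstoI)
    fix r :: real assume "r > 0"
    then have "eventually (\<lambda>n. \<forall>j<n. \<bar>g n j - f (real j / real n)\<bar> \<le> r/2) sequentially"
      by (intro close) simp
    then show "eventually (\<lambda>n. dist ((\<Sum>j<n. g n j) / real n - (\<Sum>j<n. f (real j / real n)) / real n) 0 < r)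
            sequentially"
    proof eventually_elim
      case (elim n)
      then have "\<bar>(\<Sum>j<n. g n j) / real n - (\<Sum>j<n. f (real j / real n)) / real n\<bar> \<le> r/2"
        using \<open>r > 0\<close> by (intro abs_average_diff_le) auto
      then show ?case
        using \<open>r > 0\<close> by (simp add: dist_real_def)
    qed
  qed
  from tendsto_add[OF this riemann_sum_tendsto_integral[OF f]] show ?thesis
    by simp
qed

lemma continuous_on_Times_uniform_modulus:
  fixes \<phi> :: "real \<Rightarrow> real \<Rightarrow> real"
  assumes \<phi>: "continuous_on ({0..1} \<times> UNIV) (\<lambda>p. \<phi> (fst p) (snd p))" and "e > 0"
  obtains d where "d > 0"
    and "\<And>s y z. s \<in> {0..1} \<Longrightarrow> \<bar>y\<bar> \<le> R \<Longrightarrow> \<bar>z - y\<bar> < d \<Longrightarrow> \<bar>\<phi> s z - \<phi> s y\<bar> < e"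
proof -
  define K where "K = {0..1::real} \<times> {-R-1..R+1}"
  have "uniformly_continuous_on K (\<lambda>p. \<phi> (fst p) (snd p))"
    by (rule compact_uniformly_continuous[OF continuous_on_subset[OF \<phi>]])
       (auto simp: K_def intro!: compact_Times)
  then obtain d where "d > 0" and d: "\<And>p p'. p \<in> K \<Longrightarrow> p' \<in> K \<Longrightarrow> dist p' p < d
      \<Longrightarrow> dist (\<phi> (fst p') (snd p')) (\<phi> (fst p) (snd p)) < e"
    using \<open>e > 0\<close> unfolding uniformly_continuous_on_def by metis
  show ?thesis
  proof (rule that[of "min 1 d"])
    fix s y z :: real assume "s \<in> {0..1}" "\<bar>y\<bar> \<le> R" "\<bar>z - y\<bar> < min 1 d"
    then have "(s, y) \<in> K" "(s, z) \<in> K" "dist (s, z) (s, y) < d"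
      by (auto simp: K_def dist_Pair_Pair dist_real_def abs_le_iff)
    from d[OF this] show "\<bar>\<phi> s z - \<phi> s y\<bar> < e"
      by (simp add: dist_real_def)
  qed (use \<open>d > 0\<close> in simp)
qed

lemma affine_perturbation_uniformly_close:
  fixes w :: "real \<Rightarrow> real" and A :: "nat \<Rightarrow> real" and B :: "nat \<Rightarrow> nat \<Rightarrow> real"
  assumes M: "\<And>s. s \<in> {0..1} \<Longrightarrow> \<bar>w s\<bar> \<le> M"
    and A: "A \<longlonglongrightarrow> \<alpha>"
    and B: "\<And>e. e > 0 \<Longrightarrow> eventually (\<lambda>n. \<forall>j<n. \<bar>B n j - x\<bar> \<le> e) sequentially"
    and "d > 0"
  shows "eventually (\<lambda>n. \<forall>j<n.
    \<bar>(A n * w (real j / real n) + B n j) - (\<alpha> * w (real j / real n) + x)\<bar> < d) sequentially"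
proof -
  have "(\<lambda>n. \<bar>A n - \<alpha>\<bar> * M) \<longlonglongrightarrow> \<bar>\<alpha> - \<alpha>\<bar> * M"
    by (intro tendsto_intros A)
  then have "eventually (\<lambda>n. \<bar>A n - \<alpha>\<bar> * M < d/2) sequentially"
    using \<open>d > 0\<close> by (intro order_tendstoD(2)) auto
  moreover have "eventually (\<lambda>n. \<forall>j<n. \<bar>B n j - x\<bar> \<le> d/4) sequentially"
    using \<open>d > 0\<close> by (intro B) simp
  ultimately show ?thesis
  proof eventually_elim
    case (elim n)
    show ?case
    proof (intro allI impI)
      fix j assume "j < n"
      define s where "s = real j / real n"
      have "\<bar>(A n * w s + B n j) - (\<alpha> * w s + x)\<bar> = \<bar>(A n - \<alpha>) * w s + (B n j - x)\<bar>"
        by (simp add: algebra_simps)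
      also have "\<dots> \<le> \<bar>A n - \<alpha>\<bar> * \<bar>w s\<bar> + \<bar>B n j - x\<bar>"
        by (metis abs_mult abs_triangle_ineq)
      also have "\<dots> \<le> \<bar>A n - \<alpha>\<bar> * M + d/4"
        using M[of s] elim \<open>j < n\<close> by (intro add_mono mult_left_mono) (auto simp: s_def)
      also have "\<dots> < d"
        using elim \<open>d > 0\<close> by simp
      finally show "\<bar>(A n * w (real j / real n) + B n j) - (\<alpha> * w (real j / real n) + x)\<bar> < d"
        by (simp add: s_def)
    qed
  qed
qed

lemma riemann_sum_composition_tendsto:
  fixes \<phi> :: "real \<Rightarrow> real \<Rightarrow> real" and w :: "real \<Rightarrow> real"
    and A :: "nat \<Rightarrow> real" and B :: "nat \<Rightarrow> nat \<Rightarrow> real"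
  assumes \<phi>: "continuous_on ({0..1} \<times> UNIV) (\<lambda>p. \<phi> (fst p) (snd p))"
    and w: "continuous_on {0..1} w"
    and A: "A \<longlonglongrightarrow> \<alpha>"
    and B: "\<And>e. e > 0 \<Longrightarrow> eventually (\<lambda>n. \<forall>j<n. \<bar>B n j - x\<bar> \<le> e) sequentially"
  shows "(\<lambda>n. (\<Sum>j<n. \<phi> (real j / real n) (A n * w (real j / real n) + B n j)) / real n)
           \<longlonglongrightarrow> integral {0..1} (\<lambda>s. \<phi> s (\<alpha> * w s + x))"
proof (rule riemann_sum_perturbed_tendsto_integral)
  have "continuous_on {0..1} ((\<lambda>p. \<phi> (fst p) (snd p)) \<circ> (\<lambda>s. (s, \<alpha> * w s + x)))"
    by (rule continuous_on_compose[OF _ continuous_on_subset[OF \<phi>]])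
       (auto intro!: continuous_intros w)
  then show "continuous_on {0..1} (\<lambda>s. \<phi> s (\<alpha> * w s + x))"
    by (simp add: o_def)
  obtain M where M: "\<And>s. s \<in> {0..1} \<Longrightarrow> \<bar>w s\<bar> \<le> M"
    using compact_imp_bounded[OF compact_continuous_image[OF w compact_Icc]]
    unfolding bounded_pos by fastforce
  fix e :: real assume "e > 0"
  obtain d where "d > 0" and d: "\<And>s y z. s \<in> {0..1} \<Longrightarrow> \<bar>y\<bar> \<le> \<bar>\<alpha>\<bar> * M + \<bar>x\<bar>
      \<Longrightarrow> \<bar>z - y\<bar> < d \<Longrightarrow> \<bar>\<phi> s z - \<phi> s y\<bar> < e"
    using continuous_on_Times_uniform_modulus[OF \<phi> \<open>e > 0\<close>, where R = "\<bar>\<alpha>\<bar> * M + \<bar>x\<bar>"]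
    by blast
  have y: "\<bar>\<alpha> * w s + x\<bar> \<le> \<bar>\<alpha>\<bar> * M + \<bar>x\<bar>" if "s \<in> {0..1}" for s
  proof -
    have "\<bar>\<alpha> * w s + x\<bar> \<le> \<bar>\<alpha>\<bar> * \<bar>w s\<bar> + \<bar>x\<bar>"
      by (metis abs_mult abs_triangle_ineq)
    also have "\<dots> \<le> \<bar>\<alpha>\<bar> * M + \<bar>x\<bar>"
      using M[OF that] by (intro add_mono mult_left_mono) auto
    finally show ?thesis .
  qed
  have "eventually (\<lambda>n. \<forall>j<n.
      \<bar>(A n * w (real j / real n) + B n j) - (\<alpha> * w (real j / real n) + x)\<bar> < d) sequentially"
    by (rule affine_perturbation_uniformly_close[OF M A B \<open>d > 0\<close>])
  then
  show "eventually (\<lambda>n. \<forall>j<n. \<bar>\<phi> (real j / real n) (A n * w (real j / real n) + B n j)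
          - \<phi> (real j / real n) (\<alpha> * w (real j / real n) + x)\<bar> \<le> e) sequentially"
    by eventually_elim (auto intro!: less_imp_le d y)
qed

lemma cosh_power_divide_uniformly_close:
  fixes c x e :: real
  assumes "e > 0"
  shows "eventually (\<lambda>n. \<forall>j\<le>n. \<bar>x / cosh (c / real n) ^ j - x\<bar> \<le> e) sequentially"
proof -
  have "(\<lambda>n. \<bar>x\<bar> * (cosh (c / real n) ^ n - 1)) \<longlonglongrightarrow> 0"
    unfolding cosh_field_def by real_asymp
  then have "eventually (\<lambda>n. \<bar>x\<bar> * (cosh (c / real n) ^ n - 1) < e) sequentially"
    using \<open>e > 0\<close> by (rule order_tendstoD)
  then show ?thesis
  proof eventually_elim
    case (elim n)
    show ?case
    proof (intro allI impI)
      fix j assume "j \<le> n"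
      define y where "y = cosh (c / real n) ^ j"
      have "1 \<le> y" "y \<le> cosh (c / real n) ^ n"
        using \<open>j \<le> n\<close> by (auto simp: y_def cosh_real_ge_1 one_le_power power_increasing)
      have "x / y - x = - (x * ((y - 1) / y))"
        using \<open>1 \<le> y\<close> by (simp add: field_simps)
      then have "\<bar>x / y - x\<bar> = \<bar>x\<bar> * ((y - 1) / y)"
        using \<open>1 \<le> y\<close> by (simp add: abs_mult)
      also have "\<dots> \<le> \<bar>x\<bar> * (y - 1)"
        using \<open>1 \<le> y\<close> by (intro mult_left_mono) (auto simp: divide_le_eq mult_le_cancel_left1)
      also have "\<dots> \<le> \<bar>x\<bar> * (cosh (c / real n) ^ n - 1)"
        using \<open>y \<le> _\<close> by (intro mult_left_mono) auto
      finally show "\<bar>x / cosh (c / real n) ^ j - x\<bar> \<le> e"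
        using elim by (simp add: y_def)
    qed
  qed
qed

lemma tendsto_sqrt_n_sinh: "(\<lambda>n. sqrt (real n * sinh (c / real n))) \<longlonglongrightarrow> sqrt c"
proof (rule tendsto_real_sqrt)
  show "(\<lambda>n. real n * sinh (c / real n)) \<longlonglongrightarrow> c"
    unfolding sinh_field_def by real_asymp
qed

lemma riemann_sum_along_scaled_path:
  fixes \<phi> :: "real \<Rightarrow> real \<Rightarrow> real" and w :: "real \<Rightarrow> real" and t x :: real
  assumes \<phi>: "continuous_on ({0..1} \<times> UNIV) (\<lambda>p. \<phi> (fst p) (snd p))"
    and w: "continuous_on {0..1} w"
  shows "(\<lambda>n. (\<Sum>j<n. \<phi> (real j / real n)
             (sqrt (real n * sinh (2*t / real n)) * w (real j / real n) + x / cosh (2*t / real n) ^ j))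
             / real n)
           \<longlonglongrightarrow> integral {0..1} (\<lambda>s. \<phi> s (sqrt (2*t) * w s + x))"
proof (rule riemann_sum_composition_tendsto[OF \<phi> w tendsto_sqrt_n_sinh])
  fix e :: real assume "e > 0"
  from cosh_power_divide_uniformly_close[OF this, of x "2*t"]
  show "eventually (\<lambda>n. \<forall>j<n. \<bar>x / cosh (2*t / real n) ^ j - x\<bar> \<le> e) sequentially"
    by eventually_elim auto
qed

lemma two_le_add_inverse:
  fixes y :: real
  assumes "y > 0"
  shows "2 \<le> y + 1 / y"
proof -
  have "y + 1 / y - 2 = (y - 1)^2 / y"
    using assms by (simp add: field_simps power2_eq_square)
  moreover have "0 \<le> (y - 1)^2 / y"
    using assms by simp
  ultimately show ?thesis
    by linarith
qed

lemma Fn_eq_exp_telescoped: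
  fixes w :: "real \<Rightarrow> real"
  assumes "w 0 = 0"
  shows "Fn t w n = exp (- (real n / 2 *
    ((cosh (2*t / real n) + 1 / cosh (2*t / real n) - 2) * (\<Sum>i<n. (w (real i / real n))^2)
     + (cosh (2*t / real n) - 1) * (w 1)^2)))"
proof (cases "n = 0")
  case False
  define C where "C = cosh (2*t / real n)"
  define S where "S = (\<Sum>i<n. (w (real i / real n))^2)"
  have shift: "(\<Sum>i<n. (w (real (Suc i) / real n))^2) = S + (w 1)^2"
    using sum_lessThan_telescope[of "\<lambda>i. (w (real i / real n))^2" n] False assms
    by (simp add: S_def sum_subtractf)
  have "(\<Sum>i=1..n. (1 - C) * (w (real i / real n))^2 + (1 - inverse C) * (w (real (i - 1) / real n))^2)
      = (\<Sum>i<n. (1 - C) * (w (real (Suc i) / real n))^2 + (1 - 1 / C) * (w (real i / real n))^2)"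
    by (simp add: sum.atLeast1_atMost_eq inverse_eq_divide)
  also have "\<dots> = (1 - C) * (\<Sum>i<n. (w (real (Suc i) / real n))^2) + (1 - 1 / C) * S"
    by (simp add: sum.distrib sum_distrib_left S_def del: of_nat_Suc)
  also have "\<dots> = - ((C + 1 / C - 2) * S + (C - 1) * (w 1)^2)"
    unfolding shift by (simp add: algebra_simps)
  finally have exponent: "(\<Sum>i=1..n. (1 - C) * (w (real i / real n))^2
      + (1 - inverse C) * (w (real (i - 1) / real n))^2) = - ((C + 1 / C - 2) * S + (C - 1) * (w 1)^2)" .
  show ?thesis
    unfolding Fn_def C_def [symmetric] S_def [symmetric] exponent by (simp only: mult_minus_right)
qed (simp add: Fn_def)

lemma Fn_le_1:
  assumes "w 0 = 0"
  shows "Fn t w n \<le> 1"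
proof -
  have "0 \<le> (cosh (2*t / real n) + 1 / cosh (2*t / real n) - 2) * (\<Sum>i<n. (w (real i / real n))^2)"
    using two_le_add_inverse[OF cosh_real_pos] by (simp add: sum_nonneg)
  moreover have "0 \<le> (cosh (2*t / real n) - 1) * (w 1)^2"
    using cosh_real_ge_1 by simp
  ultimately show ?thesis
    unfolding Fn_eq_exp_telescoped[of w, OF assms] by simp
qed

lemma Fn_tendsto_1:
  assumes w: "continuous_on {0..1} w" and "w 0 = 0"
  shows "(\<lambda>n. Fn t w n) \<longlonglongrightarrow> 1"
proof -
  obtain M where M: "\<And>s. s \<in> {0..1} \<Longrightarrow> \<bar>w s\<bar> \<le> M"
    using compact_imp_bounded[OF compact_continuous_image[OF w compact_Icc]]
    unfolding bounded_pos by fastforce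
  define C where "C n = cosh (2*t / real n)" for n :: nat
  define S where "S n = (\<Sum>i<n. (w (real i / real n))^2)" for n
  define E where "E n = real n / 2 * ((C n + 1 / C n - 2) * S n + (C n - 1) * (w 1)^2)" for n
  define bound where "bound n = real n / 2 * ((C n + 1 / C n - 2) * (real n * M^2) + (C n - 1) * (w 1)^2)"
    for n
  have "E n \<le> bound n" for n
  proof -
    have "(w s)^2 \<le> M^2" if "s \<in> {0..1}" for s
      using power_mono[OF M[OF that] abs_ge_zero, of 2] by simp
    then have "S n \<le> (\<Sum>i<n. M^2)"
      unfolding S_def by (intro sum_mono) auto
    then have "(C n + 1 / C n - 2) * S n \<le> (C n + 1 / C n - 2) * (real n * M^2)"
      using two_le_add_inverse[OF cosh_real_pos] by (intro mult_left_mono) (auto simp: C_def)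
    then show ?thesis
      unfolding E_def bound_def by (intro mult_left_mono) auto
  qed
  moreover have "0 \<le> E n" for n
  proof -
    have "0 \<le> (C n + 1 / C n - 2) * S n"
      using two_le_add_inverse[OF cosh_real_pos] by (simp add: C_def S_def sum_nonneg)
    moreover have "0 \<le> (C n - 1) * (w 1)^2"
      using cosh_real_ge_1 by (simp add: C_def)
    ultimately show ?thesis
      by (simp add: E_def)
  qed
  moreover have "bound \<longlonglongrightarrow> 0"
    unfolding bound_def C_def cosh_field_def by real_asymp
  ultimately have "E \<longlonglongrightarrow> 0"
    using tendsto_sandwich[of "\<lambda>_. 0" E sequentially bound 0] by (simp add: always_eventually)
  then have "(\<lambda>n. exp (- E n)) \<longlonglongrightarrow> exp (- 0)"
    by (intro tendsto_intros)
  then show ?thesis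
    by (simp add: Fn_eq_exp_telescoped[of w, OF \<open>w 0 = 0\<close>] E_def C_def S_def)
qed

lemma Gn_le_1:
  assumes "t \<ge> 0"
  shows "Gn t x w n \<le> 1"
proof -
  have "0 \<le> sinh (2*t / real n) / cosh (2*t / real n) * (\<Sum>j=0..n-1.
      (sqrt (real n * sinh (2*t / real n)) * w (real j / real n) + x / cosh (2*t / real n) ^ j)^2)"
    using assms by (intro mult_nonneg_nonneg sum_nonneg) auto
  then show ?thesis
    unfolding Gn_def by (simp only: mult.assoc exp_le_one_iff)
qed

lemma Gn_tendsto:
  assumes w: "continuous_on {0..1} w"
  shows "(\<lambda>n. Gn t x w n) \<longlonglongrightarrow> exp (- t * integral {0..1} (\<lambda>s. (x + sqrt (2*t) * w s)^2))"
proof -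
  define q where "q n = real n / 2 * (sinh (2*t / real n) / cosh (2*t / real n))" for n :: nat
  define S where "S n = (\<Sum>j<n. (sqrt (real n * sinh (2*t / real n)) * w (real j / real n)
      + x / cosh (2*t / real n) ^ j)^2) / real n" for n :: nat
  have "q \<longlonglongrightarrow> t"
    unfolding q_def sinh_field_def cosh_field_def by real_asymp
  moreover have "S \<longlonglongrightarrow> integral {0..1} (\<lambda>s. (x + sqrt (2*t) * w s)^2)"
    unfolding add.commute[of x]
    using riemann_sum_along_scaled_path[of "\<lambda>s y. y^2", OF _ w, of t x]
    by (simp add: S_def [abs_def] continuous_intros)
  ultimately have "(\<lambda>n. exp (- q n * S n)) \<longlonglongrightarrow> exp (- t * integral {0..1} (\<lambda>s. (x + sqrt (2*t) * w s)^2))"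
    by (intro tendsto_intros)
  moreover have "eventually (\<lambda>n. exp (- q n * S n) = Gn t x w n) sequentially"
    using eventually_gt_at_top[of 0]
  proof eventually_elim
    case (elim n)
    then have "{0..n-1} = {..<n}"
      by auto
    with elim show ?case
      by (simp add: Gn_def q_def S_def)
  qed
  ultimately show ?thesis
    by (rule Lim_transform_eventually)
qed

lemma Hn_eq_exp_riemann_sum:
  assumes "n > 0"
  shows "Hn t x c w n = exp (- t * ((\<Sum>j<n. c (t * (1 - real j / real n))
    (sqrt (real n * sinh (2*t / real n)) * w (real j / real n) + x / cosh (2*t / real n) ^ j)) / real n))"
proof -
  have "{0..n-1} = {..<n}"
    using assms by auto
  moreover have "real (n - j) * t / real n = t * (1 - real j / real n)" if "j < n" for j
    using assms that by (simp add: of_nat_diff field_simps)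
  ultimately have "(\<Sum>j=0..n-1. c (real (n - j) * t / real n)
      (sqrt (real n * sinh (2*t / real n)) * w (real j / real n) + x / cosh (2*t / real n) ^ j))
    = (\<Sum>j<n. c (t * (1 - real j / real n))
      (sqrt (real n * sinh (2*t / real n)) * w (real j / real n) + x / cosh (2*t / real n) ^ j))"
    by (intro sum.cong) auto
  then show ?thesis
    unfolding Hn_def by simp
qed

lemma Hn_le_exp:
  assumes "t \<ge> 0" and lower: "\<forall>s\<ge>0. \<forall>y. m \<le> c s y" and "n > 0"
  shows "Hn t x c w n \<le> exp (- m * t)"
proof -
  define S where "S = (\<Sum>j<n. c (t * (1 - real j / real n))
    (sqrt (real n * sinh (2*t / real n)) * w (real j / real n) + x / cosh (2*t / real n) ^ j))"
  have "real n * m \<le> S"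
    using sum_mono[of "{..<n}" "\<lambda>_. m"] lower \<open>t \<ge> 0\<close> unfolding S_def by fastforce
  then have "m \<le> S / real n"
    using \<open>n > 0\<close> by (simp add: field_simps)
  then have "- t * (S / real n) \<le> - m * t"
    using mult_right_mono[OF _ \<open>t \<ge> 0\<close>] by (metis mult.commute mult_minus_left neg_le_iff_le)
  then show ?thesis
    unfolding Hn_eq_exp_riemann_sum[OF \<open>n > 0\<close>] S_def by simp
qed

lemma Hn_tendsto:
  assumes "t \<ge> 0" and c: "continuous_on ({0..} \<times> UNIV) (\<lambda>p. c (fst p) (snd p))"
    and w: "continuous_on {0..1} w"
  shows "(\<lambda>n. Hn t x c w n) \<longlonglongrightarrow> exp (- t * integral {0..1} (\<lambda>s. c (t * (1 - s)) (sqrt (2*t) * w s + x)))"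
proof -
  have "continuous_on ({0..1} \<times> UNIV) ((\<lambda>p. c (fst p) (snd p)) \<circ> (\<lambda>p. (t * (1 - fst p), snd p)))"
    using \<open>t \<ge> 0\<close>
    by (intro continuous_on_compose continuous_on_subset[OF c]) (auto intro!: continuous_intros)
  then have "(\<lambda>n. (\<Sum>j<n. c (t * (1 - real j / real n))
      (sqrt (real n * sinh (2*t / real n)) * w (real j / real n) + x / cosh (2*t / real n) ^ j)) / real n)
      \<longlonglongrightarrow> integral {0..1} (\<lambda>s. c (t * (1 - s)) (sqrt (2*t) * w s + x))"
    by (intro riemann_sum_along_scaled_path[OF _ w]) (simp add: o_def)
  then have "(\<lambda>n. exp (- t * ((\<Sum>j<n. c (t * (1 - real j / real n))
      (sqrt (real n * sinh (2*t / real n)) * w (real j / real n) + x / cosh (2*t / real n) ^ j)) / real n)))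
      \<longlonglongrightarrow> exp (- t * integral {0..1} (\<lambda>s. c (t * (1 - s)) (sqrt (2*t) * w s + x)))"
    by (intro tendsto_intros)
  moreover have "eventually (\<lambda>n. exp (- t * ((\<Sum>j<n. c (t * (1 - real j / real n))
      (sqrt (real n * sinh (2*t / real n)) * w (real j / real n) + x / cosh (2*t / real n) ^ j)) / real n))
      = Hn t x c w n) sequentially"
    using eventually_gt_at_top[of 0] by eventually_elim (simp add: Hn_eq_exp_riemann_sum)
  ultimately show ?thesis
    by (rule Lim_transform_eventually)
qed

lemma abs_le_supnorm:
  assumes "bounded (range f)"
  shows "\<bar>f y\<bar> \<le> supnorm f"
proof -
  have "bdd_above (range (\<lambda>y. \<bar>f y\<bar>))"
    using assms unfolding bounded_iff by (auto intro: bdd_aboveI2)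
  then show ?thesis
    unfolding supnorm_def by (rule cSUP_upper[OF UNIV_I])
qed

lemma tendsto_scaled_endpoint:
  "(\<lambda>n. sqrt (real n * sinh (c / real n)) * a + x / cosh (c / real n) ^ n) \<longlonglongrightarrow> sqrt c * a + x"
proof -
  have "(\<lambda>n. cosh (c / real n) ^ n) \<longlonglongrightarrow> 1"
    unfolding cosh_field_def by real_asymp
  from tendsto_add[OF tendsto_mult_right[OF tendsto_sqrt_n_sinh] tendsto_divide[OF tendsto_const this]]
  show ?thesis
    by simp
qed

theorem lemma1:
  fixes t x m :: real and v0 :: "real \<Rightarrow> real" and c :: "real \<Rightarrow> real \<Rightarrow> real"
    and w :: "real \<Rightarrow> real"
  assumes t_pos: "t > 0"
    and v0_cont: "continuous_on UNIV v0"
    and v0_bdd: "bounded (range v0)"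
    and c_cont: "continuous_on ({0..} \<times> UNIV) (\<lambda>p. c (fst p) (snd p))"
    and c_lower: "\<forall>s\<ge>0. \<forall>y. m \<le> c s y"
    and c_deriv: "\<exists>cx :: real \<Rightarrow> real \<Rightarrow> real.
        (\<forall>s>0. \<forall>y. ((\<lambda>z. c s z) has_real_derivative cx s y) (at y))
        \<and> continuous_on ({0..} \<times> UNIV) (\<lambda>p. cx (fst p) (snd p))
        \<and> bounded ((\<lambda>p. cx (fst p) (snd p)) ` ({0..} \<times> UNIV))"
    and w_CW: "w \<in> CW"
  shows
    "((\<forall>n\<ge>1. 0 \<le> Fn t w n \<and> Fn t w n \<le> 1) \<and> (\<lambda>n. Fn t w n) \<longlonglongrightarrow> 1)
     \<and> ((\<forall>n\<ge>1. 0 \<le> Gn t x w n \<and> Gn t x w n \<le> 1) \<and>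
       (\<lambda>n. Gn t x w n) \<longlonglongrightarrow> exp (- t * integral {0..1} (\<lambda>s. (x + sqrt (2*t) * w s)^2)))
     \<and> ((\<forall>n\<ge>1. 0 \<le> Hn t x c w n \<and> Hn t x c w n \<le> exp (- m * t)) \<and>
       (\<lambda>n. Hn t x c w n) \<longlonglongrightarrow> exp (- t * integral {0..1} (\<lambda>s. c (t * (1 - s)) (sqrt (2*t) * w s + x))))
     \<and> ((\<forall>n\<ge>1. \<bar>v0 (sqrt (real n * sinh (2*t / real n)) * w 1 + x / cosh (2*t / real n) ^ n)\<bar> \<le> supnorm v0) \<and>
       (\<lambda>n. v0 (sqrt (real n * sinh (2*t / real n)) * w 1 + x / cosh (2*t / real n) ^ n))
         \<longlonglongrightarrow> v0 (sqrt (2*t) * w 1 + x))"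
proof -
  have w: "continuous_on {0..1} w" and "w 0 = 0"
    using w_CW by (auto simp: CW_def)
  have "t \<ge> 0"
    using t_pos by simp
  have nonneg: "0 \<le> Fn t w n" "0 \<le> Gn t x w n" "0 \<le> Hn t x c w n" for n
    by (simp_all add: Fn_def Gn_def Hn_def)
  have "(\<lambda>n. v0 (sqrt (real n * sinh (2*t / real n)) * w 1 + x / cosh (2*t / real n) ^ n))
      \<longlonglongrightarrow> v0 (sqrt (2*t) * w 1 + x)"
    by (rule continuous_on_tendsto_compose[OF v0_cont tendsto_scaled_endpoint]) auto
  then show ?thesis
    using nonneg Fn_le_1[of w, OF \<open>w 0 = 0\<close>] Fn_tendsto_1[OF w \<open>w 0 = 0\<close>]
      Gn_le_1[OF \<open>t \<ge> 0\<close>] Gn_tendsto[OF w] Hn_le_exp[OF \<open>t \<ge> 0\<close> c_lower]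
      Hn_tendsto[OF \<open>t \<ge> 0\<close> c_cont w] abs_le_supnorm[OF v0_bdd]
    by auto
qed

end
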